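(* Let $F$ be a non-degenerate distribution function with finite second moment belonging to the class NCP, and let $L_2=L_2^{(n)}$ be the partial maxima BLUE of $\theta_2$. Let $m_k=\mathbb{E}[Z_k]$ and $s_k^2=\operatorname{Var}[Z_k]$. Then (i) for every $n\ge2$, \[ \operatorname{Var}[L_2^{(n)}]\le\frac{\theta_2^2}{\sum_{k=1}^{n-1}m_k^2/s_k^2}; \] (ii) $L_2^{(n)}$ is consistent for $\theta_2$ (as $n\to\infty$) if $\sum_{k=1}^\infty m_k^2/s_k^2=+\infty$.
   Context: For unknown $\theta_1\in\mathbb{R}$, $\theta_2>0$, $X_1^*,\dots,X_n^*$ are i.i.d. with distribution function $F((x-\theta_1)/\theta_2)$, $X^*_{j:j}=\max\{X_1^*,\dots,X_j^*\}$. Linear estimators are $\sum_i c_iX^*_{i:i}$ with constant $c_i$; $L_2^{(n)}$ is the linear estimator unbiased for $\theta_2$ for all $(\theta_1,\theta_2)$ with minimum variance. Let $X_1,X_2,\dots$ be i.i.d. from $F$, $X_{k:k}=\max\{X_1,\dots,X_k\}$, and $Z_k=X_{k+1:k+1}-X_{k:k}$, $k\ge1$. $F$ belongs to NCP if $\operatorname{Cov}[Z_i,Z_j]\le0$ for all positive integers $i\ne j$. *)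

theory Defs
  imports "HOL-Probability.Probability"
begin

definition pmax :: "(nat \<Rightarrow> 'a \<Rightarrow> real) \<Rightarrow> nat \<Rightarrow> 'a \<Rightarrow> real" where
  "pmax X k \<omega> = Max ((\<lambda>i. X i \<omega>) ` {1..k})"

definition incr :: "(nat \<Rightarrow> 'a \<Rightarrow> real) \<Rightarrow> nat \<Rightarrow> 'a \<Rightarrow> real" where
  "incr X k \<omega> = pmax X (k + 1) \<omega> - pmax X k \<omega>"

definition (in prob_space) covariance :: "('a \<Rightarrow> real) \<Rightarrow> ('a \<Rightarrow> real) \<Rightarrow> real" where
  "covariance U V = expectation (\<lambda>\<omega>. (U \<omega> - expectation U) * (V \<omega> - expectation V))"

definition (in prob_space) NCP :: "(nat \<Rightarrow> 'a \<Rightarrow> real) \<Rightarrow> bool" where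
  "NCP X \<longleftrightarrow> (\<forall>i j. 1 \<le> i \<longrightarrow> 1 \<le> j \<longrightarrow> i \<noteq> j \<longrightarrow> covariance (incr X i) (incr X j) \<le> 0)"

text \<open>Location-scale sample X*_i = theta1 + theta2 * X_i (X_i with d.f. F, so X*_i has d.f.
  F((x - theta1)/theta2)).\<close>
definition lsc :: "real \<Rightarrow> real \<Rightarrow> (nat \<Rightarrow> 'a \<Rightarrow> real) \<Rightarrow> nat \<Rightarrow> 'a \<Rightarrow> real" where
  "lsc t1 t2 X i \<omega> = t1 + t2 * X i \<omega>"

definition lin_est :: "(nat \<Rightarrow> real) \<Rightarrow> nat \<Rightarrow> real \<Rightarrow> real \<Rightarrow> (nat \<Rightarrow> 'a \<Rightarrow> real) \<Rightarrow> 'a \<Rightarrow> real" where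
  "lin_est c n t1 t2 X \<omega> = (\<Sum>i=1..n. c i * pmax (lsc t1 t2 X) i \<omega>)"

definition (in prob_space) unbiased2 :: "(nat \<Rightarrow> 'a \<Rightarrow> real) \<Rightarrow> nat \<Rightarrow> (nat \<Rightarrow> real) \<Rightarrow> bool" where
  "unbiased2 X n c \<longleftrightarrow> (\<forall>t1 t2. 0 < t2 \<longrightarrow> expectation (lin_est c n t1 t2 X) = t2)"

definition (in prob_space) BLUE2 :: "(nat \<Rightarrow> 'a \<Rightarrow> real) \<Rightarrow> nat \<Rightarrow> (nat \<Rightarrow> real) \<Rightarrow> bool" where
  "BLUE2 X n c \<longleftrightarrow> unbiased2 X n c \<and>
     (\<forall>c'. unbiased2 X n c' \<longrightarrow> (\<forall>t1 t2. 0 < t2 \<longrightarrow>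
        variance (lin_est c n t1 t2 X) \<le> variance (lin_est c' n t1 t2 X)))"

end

theory Submission
  imports Defs
begin

text \<open>After the change of location and scale, a linear estimator whose coefficients are successive
  differences \<open>c\<^sub>i = d\<^sub>i\<^sub>-\<^sub>1 - d\<^sub>i\<close> with \<open>d\<^sub>0 = d\<^sub>n = 0\<close> is \<open>\<theta>\<^sub>2 \<Sum> d\<^sub>k Z\<^sub>k\<close> by summation by parts.
  Taking \<open>d\<^sub>k\<close> proportional to \<open>m\<^sub>k / s\<^sub>k\<^sup>2\<close> and normalised by \<open>\<Sum> d\<^sub>k m\<^sub>k = 1\<close> gives an unbiased
  estimator; since all \<open>d\<^sub>k \<ge> 0\<close> and the \<open>Z\<^sub>k\<close> are pairwise nonpositively correlated, its variance
  is at most \<open>\<theta>\<^sub>2\<^sup>2 \<Sum> d\<^sub>k\<^sup>2 s\<^sub>k\<^sup>2 = \<theta>\<^sub>2\<^sup>2 / \<Sum> m\<^sub>k\<^sup>2/s\<^sub>k\<^sup>2\<close>, and the BLUE can only do better. The sum is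
  positive because a non-degenerate \<open>F\<close> makes \<open>Z\<^sub>1\<close> non-constant, and consistency then follows
  from Chebyshev's inequality.\<close>

lemma square_integrable_add:
  fixes f g :: "'a \<Rightarrow> real"
  assumes [measurable]: "f \<in> borel_measurable M" "g \<in> borel_measurable M"
    and "integrable M (\<lambda>x. (f x)\<^sup>2)" "integrable M (\<lambda>x. (g x)\<^sup>2)"
  shows "integrable M (\<lambda>x. (f x + g x)\<^sup>2)"
proof (rule Bochner_Integration.integrable_bound)
  show "integrable M (\<lambda>x. 2 * (f x)\<^sup>2 + 2 * (g x)\<^sup>2)"
    using assms by auto
  show "AE x in M. norm ((f x + g x)\<^sup>2) \<le> norm (2 * (f x)\<^sup>2 + 2 * (g x)\<^sup>2)"
  proof (intro AE_I2)
    fix x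
    have "(f x + g x)\<^sup>2 \<le> 2 * (f x)\<^sup>2 + 2 * (g x)\<^sup>2"
      using sum_squares_bound[of "f x" "g x"] by (simp add: power2_sum)
    then show "norm ((f x + g x)\<^sup>2) \<le> norm (2 * (f x)\<^sup>2 + 2 * (g x)\<^sup>2)"
      by simp
  qed
qed measurable

lemma square_integrable_mult:
  fixes f g :: "'a \<Rightarrow> real"
  assumes [measurable]: "f \<in> borel_measurable M" "g \<in> borel_measurable M"
    and "integrable M (\<lambda>x. (f x)\<^sup>2)" "integrable M (\<lambda>x. (g x)\<^sup>2)"
  shows "integrable M (\<lambda>x. f x * g x)"
proof (rule Bochner_Integration.integrable_bound)
  show "integrable M (\<lambda>x. (f x)\<^sup>2 + (g x)\<^sup>2)"
    using assms by auto
  show "AE x in M. norm (f x * g x) \<le> norm ((f x)\<^sup>2 + (g x)\<^sup>2)"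
  proof (intro AE_I2)
    fix x
    have "2 * (\<bar>f x\<bar> * \<bar>g x\<bar>) \<le> (f x)\<^sup>2 + (g x)\<^sup>2"
      using sum_squares_bound[of "\<bar>f x\<bar>" "\<bar>g x\<bar>"] by (simp add: mult.assoc)
    moreover have "0 \<le> \<bar>f x\<bar> * \<bar>g x\<bar>"
      by simp
    ultimately have "\<bar>f x\<bar> * \<bar>g x\<bar> \<le> (f x)\<^sup>2 + (g x)\<^sup>2"
      by linarith
    then show "norm (f x * g x) \<le> norm ((f x)\<^sup>2 + (g x)\<^sup>2)"
      by (simp add: abs_mult)
  qed
qed measurable

lemma square_integrable_max:
  fixes f g :: "'a \<Rightarrow> real"
  assumes [measurable]: "f \<in> borel_measurable M" "g \<in> borel_measurable M"
    and "integrable M (\<lambda>x. (f x)\<^sup>2)" "integrable M (\<lambda>x. (g x)\<^sup>2)"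
  shows "integrable M (\<lambda>x. (max (f x) (g x))\<^sup>2)"
proof (rule Bochner_Integration.integrable_bound)
  show "integrable M (\<lambda>x. (f x)\<^sup>2 + (g x)\<^sup>2)"
    using assms by auto
  show "AE x in M. norm ((max (f x) (g x))\<^sup>2) \<le> norm ((f x)\<^sup>2 + (g x)\<^sup>2)"
    by (intro AE_I2) (auto simp: max_def)
qed measurable

lemma square_integrable_sum:
  fixes f :: "'i \<Rightarrow> 'a \<Rightarrow> real"
  assumes "finite I" and "\<And>i. i \<in> I \<Longrightarrow> f i \<in> borel_measurable M"
    and "\<And>i. i \<in> I \<Longrightarrow> integrable M (\<lambda>x. (f i x)\<^sup>2)"
  shows "integrable M (\<lambda>x. (\<Sum>i\<in>I. f i x)\<^sup>2)"
  using assms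
proof (induction I rule: finite_induct)
  case (insert a I)
  have "(\<lambda>x. \<Sum>i\<in>I. f i x) \<in> borel_measurable M"
    using insert.prems by (auto intro!: borel_measurable_sum)
  then have "integrable M (\<lambda>x. (f a x + (\<Sum>i\<in>I. f i x))\<^sup>2)"
    using insert by (intro square_integrable_add) auto
  then show ?case
    using insert.hyps by simp
qed simp

lemma (in finite_measure) square_integrable_affine:
  fixes f :: "'a \<Rightarrow> real"
  assumes [measurable]: "f \<in> borel_measurable M" and "integrable M (\<lambda>x. (f x)\<^sup>2)"
  shows "integrable M (\<lambda>x. (a + b * f x)\<^sup>2)"
proof (rule square_integrable_add)
  show "integrable M (\<lambda>x. (b * f x)\<^sup>2)"
    using integrable_mult_right[OF assms(2), of "b\<^sup>2"] by (simp add: power_mult_distrib)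
qed auto

lemma AE_imp_exists_in_non_null:
  assumes "AE x in M. P x" and "A \<in> sets M" and "measure M A \<noteq> 0"
  shows "\<exists>x\<in>A. P x"
proof (rule ccontr)
  assume "\<not> (\<exists>x\<in>A. P x)"
  then have "AE x in M. x \<notin> A"
    using assms(1) by (auto elim: AE_mp)
  then have "A \<in> null_sets M"
    using assms(2) by (simp add: AE_iff_null_sets)
  then show False
    using assms(3) by (simp add: measure_def null_sets_def)
qed

lemma integral_pos_if_not_AE_zero:
  fixes f :: "'a \<Rightarrow> real"
  assumes "integrable M f" and "AE x in M. 0 \<le> f x" and "\<not> (AE x in M. f x = 0)"
  shows "0 < integral\<^sup>L M f"
  using integral_nonneg_eq_0_iff_AE[OF assms(1,2)] integral_nonneg_AE[OF assms(2)] assms(3)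
  by linarith

lemma sum_diff_weights_by_parts:
  fixes d P :: "nat \<Rightarrow> real"
  assumes "1 \<le> n"
  shows "(\<Sum>i=1..n. (d (i - 1) - d i) * P i)
    = d 0 * P 1 - d n * P n + (\<Sum>k=1..n-1. d k * (P (k + 1) - P k))"
  using assms
proof (induction n rule: dec_induct)
  case (step n)
  then have "{1..Suc n - 1} = insert n {1..n - 1}"
    by auto
  then show ?case
    using step by (simp add: algebra_simps)
qed (simp add: algebra_simps)

text \<open>Indices with \<open>s2 k = 0\<close> contribute nothing on either side, because \<open>x / 0 = 0\<close>.\<close>

lemma inverse_variance_weights:
  fixes m s2 :: "'i \<Rightarrow> real"
  assumes S_def: "S = (\<Sum>k\<in>I. (m k)\<^sup>2 / s2 k)" and "0 < S"
  shows "(\<Sum>k\<in>I. m k / s2 k / S * m k) = 1"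
    and "(\<Sum>k\<in>I. (t * (m k / s2 k / S))\<^sup>2 * s2 k) = t\<^sup>2 / S"
proof -
  have "(\<Sum>k\<in>I. m k / s2 k / S * m k) = (\<Sum>k\<in>I. (m k)\<^sup>2 / s2 k) / S"
    by (simp add: sum_divide_distrib power2_eq_square)
  then show "(\<Sum>k\<in>I. m k / s2 k / S * m k) = 1"
    using \<open>0 < S\<close> by (simp add: S_def)
  have "(t * (m k / s2 k / S))\<^sup>2 * s2 k = t\<^sup>2 / S\<^sup>2 * ((m k)\<^sup>2 / s2 k)" for k
    by (cases "s2 k = 0") (simp_all add: power2_eq_square field_simps)
  then have "(\<Sum>k\<in>I. (t * (m k / s2 k / S))\<^sup>2 * s2 k) = t\<^sup>2 / S\<^sup>2 * S"
    by (simp add: S_def sum_distrib_left)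
  then show "(\<Sum>k\<in>I. (t * (m k / s2 k / S))\<^sup>2 * s2 k) = t\<^sup>2 / S"
    using \<open>0 < S\<close> by (simp add: power2_eq_square)
qed

context prob_space
begin

lemma variance_pos_if_not_AE_const:
  fixes Z :: "'a \<Rightarrow> real"
  assumes "Z \<in> borel_measurable M" and "integrable M (\<lambda>\<omega>. (Z \<omega>)\<^sup>2)"
    and "\<not> (AE \<omega> in M. Z \<omega> = expectation Z)"
  shows "0 < variance Z"
proof (rule integral_pos_if_not_AE_zero)
  show "integrable M (\<lambda>\<omega>. (Z \<omega> - expectation Z)\<^sup>2)"
    using square_integrable_affine[OF assms(1,2), where a = "- expectation Z" and b = 1] by simp
  show "\<not> (AE \<omega> in M. (Z \<omega> - expectation Z)\<^sup>2 = 0)"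
    using assms(3) by simp
qed simp

lemma integrable_square_if_same_cdf:
  fixes U V :: "'a \<Rightarrow> real"
  assumes [measurable]: "U \<in> borel_measurable M" "V \<in> borel_measurable M"
    and same_cdf: "\<And>x. prob {\<omega> \<in> space M. U \<omega> \<le> x} = prob {\<omega> \<in> space M. V \<omega> \<le> x}"
    and "integrable M (\<lambda>\<omega>. (V \<omega>)\<^sup>2)"
  shows "integrable M (\<lambda>\<omega>. (U \<omega>)\<^sup>2)"
proof -
  have preimage: "{\<omega> \<in> space M. W \<omega> \<le> x} = W -` {..x} \<inter> space M" for W :: "'a \<Rightarrow> real" and x
    by auto
  have "cdf (distr M borel U) = cdf (distr M borel V)"
    using same_cdf by (simp add: fun_eq_iff cdf_def measure_distr preimage)
  then have same_distr: "distr M borel U = distr M borel V"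
    by (intro cdf_unique) auto
  have "integrable (distr M borel V) (\<lambda>x. x\<^sup>2)"
    using assms by (subst integrable_distr_eq) auto
  then show ?thesis
    by (subst (asm) same_distr[symmetric], subst (asm) integrable_distr_eq) auto
qed

lemma prob_indep_vars_le_gt:
  fixes X :: "'i \<Rightarrow> 'a \<Rightarrow> real"
  assumes indep: "indep_vars (\<lambda>_. borel) X I" and "a \<in> I" "b \<in> I" "a \<noteq> b"
    and [measurable]: "X a \<in> borel_measurable M" "X b \<in> borel_measurable M"
  shows "prob {\<omega> \<in> space M. X a \<omega> \<le> x \<and> x < X b \<omega>}
    = prob {\<omega> \<in> space M. X a \<omega> \<le> x} * (1 - prob {\<omega> \<in> space M. X b \<omega> \<le> x})"
proof -
  let ?A = "\<lambda>i. if i = a then {..x} else {x<..}"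
  have "prob (\<Inter>i\<in>{a, b}. X i -` ?A i \<inter> space M) = (\<Prod>i\<in>{a, b}. prob (X i -` ?A i \<inter> space M))"
    using assms(2-4) by (intro indep_varsD[OF indep]) auto
  moreover have "(\<Inter>i\<in>{a, b}. X i -` ?A i \<inter> space M) = {\<omega> \<in> space M. X a \<omega> \<le> x \<and> x < X b \<omega>}"
    using \<open>a \<noteq> b\<close> by auto
  moreover have "X a -` {..x} \<inter> space M = {\<omega> \<in> space M. X a \<omega> \<le> x}"
    by auto
  moreover have "X b -` {x<..} \<inter> space M = space M - {\<omega> \<in> space M. X b \<omega> \<le> x}"
    by auto
  ultimately show ?thesis
    using \<open>a \<noteq> b\<close> by (simp add: prob_compl)
qed

lemma covariance_self: "covariance U U = variance U"
  by (simp add: covariance_def power2_eq_square)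

lemma variance_sum_eq_covariances:
  fixes Z :: "'i \<Rightarrow> 'a \<Rightarrow> real"
  assumes "finite I" and rv: "\<And>k. k \<in> I \<Longrightarrow> Z k \<in> borel_measurable M"
    and sq: "\<And>k. k \<in> I \<Longrightarrow> integrable M (\<lambda>\<omega>. (Z k \<omega>)\<^sup>2)"
  shows "variance (\<lambda>\<omega>. \<Sum>k\<in>I. d k * Z k \<omega>)
    = (\<Sum>j\<in>I. \<Sum>k\<in>I. d j * d k * covariance (Z j) (Z k))"
proof -
  define W where "W k \<omega> = Z k \<omega> - expectation (Z k)" for k \<omega>
  have "integrable M (Z k)" if "k \<in> I" for k
    using rv[OF that] sq[OF that] by (rule square_integrable_imp_integrable)
  then have "expectation (\<lambda>\<omega>. \<Sum>k\<in>I. d k * Z k \<omega>) = (\<Sum>k\<in>I. d k * expectation (Z k))"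
    by (simp add: integral_sum)
  then have centred: "(\<Sum>k\<in>I. d k * Z k \<omega>) - expectation (\<lambda>\<omega>. \<Sum>k\<in>I. d k * Z k \<omega>)
      = (\<Sum>k\<in>I. d k * W k \<omega>)" for \<omega>
    by (simp add: W_def sum_subtractf algebra_simps)
  have "integrable M (\<lambda>\<omega>. (W k \<omega>)\<^sup>2)" if "k \<in> I" for k
    using square_integrable_affine[OF rv sq, OF that that, where a = "- expectation (Z k)" and b = 1]
    by (simp add: W_def)
  then have "integrable M (\<lambda>\<omega>. W j \<omega> * W k \<omega>)" if "j \<in> I" "k \<in> I" for j k
    using that rv unfolding W_def by (intro square_integrable_mult) auto
  then have "variance (\<lambda>\<omega>. \<Sum>k\<in>I. d k * Z k \<omega>)
      = (\<Sum>j\<in>I. \<Sum>k\<in>I. d j * d k * expectation (\<lambda>\<omega>. W j \<omega> * W k \<omega>))"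
    by (simp add: centred power2_eq_square sum_product integral_sum algebra_simps)
  then show ?thesis
    by (simp add: covariance_def W_def)
qed

lemma variance_sum_le_if_covariances_nonpos:
  fixes Z :: "'i \<Rightarrow> 'a \<Rightarrow> real"
  assumes "finite I" and rv: "\<And>k. k \<in> I \<Longrightarrow> Z k \<in> borel_measurable M"
    and sq: "\<And>k. k \<in> I \<Longrightarrow> integrable M (\<lambda>\<omega>. (Z k \<omega>)\<^sup>2)"
    and cov: "\<And>j k. j \<in> I \<Longrightarrow> k \<in> I \<Longrightarrow> j \<noteq> k \<Longrightarrow> covariance (Z j) (Z k) \<le> 0"
    and nonneg: "\<And>k. k \<in> I \<Longrightarrow> 0 \<le> d k"
  shows "variance (\<lambda>\<omega>. \<Sum>k\<in>I. d k * Z k \<omega>) \<le> (\<Sum>k\<in>I. (d k)\<^sup>2 * variance (Z k))"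
proof -
  have "(\<Sum>j\<in>I. \<Sum>k\<in>I. d j * d k * covariance (Z j) (Z k)) \<le> (\<Sum>j\<in>I. (d j)\<^sup>2 * variance (Z j))"
  proof (rule sum_mono)
    fix j assume "j \<in> I"
    then have "(\<Sum>k\<in>I. d j * d k * covariance (Z j) (Z k))
        = d j * d j * covariance (Z j) (Z j) + (\<Sum>k\<in>I - {j}. d j * d k * covariance (Z j) (Z k))"
      using \<open>finite I\<close> by (simp add: sum.remove)
    moreover have "(\<Sum>k\<in>I - {j}. d j * d k * covariance (Z j) (Z k)) \<le> 0"
      using \<open>j \<in> I\<close> nonneg cov by (intro sum_nonpos mult_nonneg_nonpos) auto
    ultimately show "(\<Sum>k\<in>I. d j * d k * covariance (Z j) (Z k)) \<le> (d j)\<^sup>2 * variance (Z j)"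
      by (simp add: covariance_self power2_eq_square)
  qed
  then show ?thesis
    using variance_sum_eq_covariances[OF assms(1-3)] by simp
qed

lemma tendsto_prob_deviation_0:
  fixes L :: "nat \<Rightarrow> 'a \<Rightarrow> real" and v :: "nat \<Rightarrow> real"
  assumes rv: "\<And>n. L n \<in> borel_measurable M"
    and sq: "\<And>n. integrable M (\<lambda>\<omega>. (L n \<omega>)\<^sup>2)"
    and mean: "eventually (\<lambda>n. expectation (L n) = a) sequentially"
    and var: "eventually (\<lambda>n. variance (L n) \<le> v n) sequentially"
    and "v \<longlonglongrightarrow> 0" and "0 < \<epsilon>"
  shows "(\<lambda>n. prob {\<omega> \<in> space M. \<bar>L n \<omega> - a\<bar> > \<epsilon>}) \<longlonglongrightarrow> 0"
proof (rule tendsto_sandwich[OF _ _ tendsto_const])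
  show "(\<lambda>n. v n / \<epsilon>\<^sup>2) \<longlonglongrightarrow> 0"
    using tendsto_divide_zero[OF \<open>v \<longlonglongrightarrow> 0\<close>] by simp
  have "prob {\<omega> \<in> space M. \<bar>L n \<omega> - a\<bar> > \<epsilon>} \<le> v n / \<epsilon>\<^sup>2"
    if "expectation (L n) = a" "variance (L n) \<le> v n" for n
  proof -
    have "prob {\<omega> \<in> space M. \<bar>L n \<omega> - a\<bar> > \<epsilon>}
        \<le> prob {\<omega> \<in> space M. \<bar>L n \<omega> - expectation (L n)\<bar> \<ge> \<epsilon>}"
      using rv[of n] that(1) by (intro finite_measure_mono) auto
    also have "\<dots> \<le> variance (L n) / \<epsilon>\<^sup>2"
      using rv sq \<open>0 < \<epsilon>\<close> by (intro Chebyshev_inequality) (auto simp: power2_eq_square)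
    also have "\<dots> \<le> v n / \<epsilon>\<^sup>2"
      using that(2) by (simp add: divide_right_mono)
    finally show ?thesis .
  qed
  then show "eventually (\<lambda>n. prob {\<omega> \<in> space M. \<bar>L n \<omega> - a\<bar> > \<epsilon>} \<le> v n / \<epsilon>\<^sup>2) sequentially"
    using eventually_conj[OF mean var] by (auto elim: eventually_mono)
qed simp

end

subsection \<open>Partial maxima and their increments\<close>

lemma pmax_Suc_0 [simp]: "pmax X (Suc 0) \<omega> = X (Suc 0) \<omega>"
  by (simp add: pmax_def)

lemma pmax_Suc:
  assumes "1 \<le> k"
  shows "pmax X (Suc k) \<omega> = max (pmax X k \<omega>) (X (Suc k) \<omega>)"
proof -
  have "(\<lambda>i. X i \<omega>) ` {1..Suc k} = insert (X (Suc k) \<omega>) ((\<lambda>i. X i \<omega>) ` {1..k})"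
    by (auto simp: atLeastAtMostSuc_conv)
  moreover have "(\<lambda>i. X i \<omega>) ` {1..k} \<noteq> {}"
    using assms by auto
  ultimately show ?thesis
    unfolding pmax_def by (simp add: max.commute)
qed

lemma pmax_lsc:
  assumes "0 < t2" and "1 \<le> k"
  shows "pmax (lsc t1 t2 X) k \<omega> = t1 + t2 * pmax X k \<omega>"
  using assms(2)
proof (induction k rule: dec_induct)
  case (step k)
  have "max (t1 + t2 * pmax X k \<omega>) (t1 + t2 * X (Suc k) \<omega>)
      = t1 + t2 * max (pmax X k \<omega>) (X (Suc k) \<omega>)"
    using assms(1) by (auto simp: max_def)
  then show ?case
    using step by (simp add: pmax_Suc lsc_def)
qed (simp add: lsc_def)

lemma incr_nonneg: "1 \<le> k \<Longrightarrow> 0 \<le> incr X k \<omega>"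
  by (simp add: incr_def pmax_Suc)

lemma lin_est_diff_weights:
  assumes "0 < t2" and "1 \<le> n" and "d 0 = 0" and "d n = 0"
  shows "lin_est (\<lambda>i. d (i - 1) - d i) n t1 t2 X = (\<lambda>\<omega>. t2 * (\<Sum>k=1..n-1. d k * incr X k \<omega>))"
proof
  fix \<omega>
  have "lin_est (\<lambda>i. d (i - 1) - d i) n t1 t2 X \<omega>
      = t1 * (\<Sum>i=1..n. (d (i - 1) - d i) * 1) + t2 * (\<Sum>i=1..n. (d (i - 1) - d i) * pmax X i \<omega>)"
    unfolding lin_est_def sum_distrib_left sum.distrib[symmetric]
    by (intro sum.cong) (auto simp: pmax_lsc[OF assms(1)] algebra_simps)
  then show "lin_est (\<lambda>i. d (i - 1) - d i) n t1 t2 X \<omega> = t2 * (\<Sum>k=1..n-1. d k * incr X k \<omega>)"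
    using sum_diff_weights_by_parts[OF assms(2), of d "\<lambda>_. 1"]
      sum_diff_weights_by_parts[OF assms(2), of d "\<lambda>i. pmax X i \<omega>"] assms(3,4)
    by (simp add: incr_def)
qed

lemma lin_est_eq_sum:
  assumes "0 < t2"
  shows "lin_est c n t1 t2 X \<omega> = (\<Sum>i=1..n. c i * t1 + c i * t2 * pmax X i \<omega>)"
  unfolding lin_est_def
  by (intro sum.cong) (auto simp: pmax_lsc[OF assms] algebra_simps)

lemma borel_measurable_pmax [measurable]:
  assumes [measurable]: "\<And>i. X i \<in> borel_measurable M"
  shows "pmax X k \<in> borel_measurable M"
  unfolding pmax_def[abs_def] by measurable

lemma borel_measurable_incr [measurable]:
  assumes [measurable]: "\<And>i. X i \<in> borel_measurable M"
  shows "incr X k \<in> borel_measurable M"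
  unfolding incr_def[abs_def] by measurable

lemma borel_measurable_lin_est [measurable]:
  assumes [measurable]: "\<And>i. X i \<in> borel_measurable M"
  shows "lin_est c n t1 t2 X \<in> borel_measurable M"
  unfolding lin_est_def[abs_def] lsc_def[abs_def] by measurable

lemma square_integrable_pmax:
  assumes rv: "\<And>i. X i \<in> borel_measurable M"
    and sq: "\<And>i. 1 \<le> i \<Longrightarrow> integrable M (\<lambda>\<omega>. (X i \<omega>)\<^sup>2)" and "1 \<le> k"
  shows "integrable M (\<lambda>\<omega>. (pmax X k \<omega>)\<^sup>2)"
  using \<open>1 \<le> k\<close>
proof (induction k rule: dec_induct)
  case (step j)
  then show ?case
    using sq[of "Suc j"] rv by (simp add: pmax_Suc square_integrable_max)
qed (simp add: sq)

context finite_measure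
begin

lemma square_integrable_incr:
  assumes rv: "\<And>i. X i \<in> borel_measurable M"
    and sq: "\<And>i. 1 \<le> i \<Longrightarrow> integrable M (\<lambda>\<omega>. (X i \<omega>)\<^sup>2)" and "1 \<le> k"
  shows "integrable M (\<lambda>\<omega>. (incr X k \<omega>)\<^sup>2)"
proof -
  have "integrable M (\<lambda>\<omega>. (pmax X (k + 1) \<omega> + (- 1) * pmax X k \<omega>)\<^sup>2)"
    using assms square_integrable_pmax[OF rv sq]
    by (intro square_integrable_add square_integrable_affine) auto
  then show ?thesis
    by (simp add: incr_def)
qed

lemma integrable_incr:
  assumes rv: "\<And>i. X i \<in> borel_measurable M"
    and sq: "\<And>i. 1 \<le> i \<Longrightarrow> integrable M (\<lambda>\<omega>. (X i \<omega>)\<^sup>2)" and "1 \<le> k"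
  shows "integrable M (incr X k)"
  using borel_measurable_incr[OF rv] square_integrable_incr[OF rv sq \<open>1 \<le> k\<close>]
  by (rule square_integrable_imp_integrable)

lemma square_integrable_lin_est:
  assumes rv: "\<And>i. X i \<in> borel_measurable M"
    and sq: "\<And>i. 1 \<le> i \<Longrightarrow> integrable M (\<lambda>\<omega>. (X i \<omega>)\<^sup>2)" and "0 < t2"
  shows "integrable M (\<lambda>\<omega>. (lin_est c n t1 t2 X \<omega>)\<^sup>2)"
  unfolding lin_est_eq_sum[OF \<open>0 < t2\<close>]
  using rv square_integrable_pmax[OF rv sq]
  by (intro square_integrable_sum square_integrable_affine) auto

end

context prob_space
begin

lemma incr_1_not_AE_const:
  assumes rv: "X 1 \<in> borel_measurable M" "X 2 \<in> borel_measurable M"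
    and indep: "indep_vars (\<lambda>_. borel) X {1..}"
    and cdf: "prob {\<omega> \<in> space M. X 1 \<omega> \<le> x} = p" "prob {\<omega> \<in> space M. X 2 \<omega> \<le> x} = p"
    and "0 < p" "p < 1"
  shows "\<not> (AE \<omega> in M. incr X 1 \<omega> = c)"
proof
  assume AE_const: "AE \<omega> in M. incr X 1 \<omega> = c"
  \<comment> \<open>\<open>Z\<^sub>1\<close> vanishes on \<open>{X\<^sub>2 \<le> x < X\<^sub>1}\<close> and is positive on \<open>{X\<^sub>1 \<le> x < X\<^sub>2}\<close>; both have probability \<open>p (1 - p) > 0\<close>.\<close>
  have "p * (1 - p) \<noteq> 0"
    using \<open>0 < p\<close> \<open>p < 1\<close> by simp
  then have "\<exists>\<omega> \<in> {\<omega> \<in> space M. X a \<omega> \<le> x \<and> x < X b \<omega>}. incr X 1 \<omega> = c"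
    if "a \<in> {1, 2}" "b \<in> {1, 2}" "a \<noteq> b" for a b
    using that rv cdf prob_indep_vars_le_gt[OF indep, of a b x]
    by (intro AE_imp_exists_in_non_null[OF AE_const]) (auto simp: conj_commute)
  from this[of 2 1] this[of 1 2] obtain \<omega> \<omega>' where
    "X 2 \<omega> \<le> x" "x < X 1 \<omega>" "incr X 1 \<omega> = c"
    "X 1 \<omega>' \<le> x" "x < X 2 \<omega>'" "incr X 1 \<omega>' = c"
    by auto
  then show False
    by (simp add: incr_def pmax_Suc numeral_2_eq_2 max_def split: if_splits)
qed

lemma incr_1_mean_variance_pos:
  assumes rv: "\<And>i. X i \<in> borel_measurable M"
    and sq: "\<And>i. 1 \<le> i \<Longrightarrow> integrable M (\<lambda>\<omega>. (X i \<omega>)\<^sup>2)"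
    and nonconst: "\<And>c. \<not> (AE \<omega> in M. incr X 1 \<omega> = c)"
  shows "0 < expectation (incr X 1)" and "0 < variance (incr X 1)"
proof -
  have rv_incr: "incr X 1 \<in> borel_measurable M"
    using rv by (rule borel_measurable_incr)
  have sq_incr: "integrable M (\<lambda>\<omega>. (incr X 1 \<omega>)\<^sup>2)"
    using square_integrable_incr[OF rv sq] by simp
  have "integrable M (incr X 1)"
    using integrable_incr[OF rv sq] by simp
  moreover have "AE \<omega> in M. 0 \<le> incr X 1 \<omega>"
    by (simp add: incr_nonneg)
  ultimately show "0 < expectation (incr X 1)"
    using nonconst[of 0] by (rule integral_pos_if_not_AE_zero)
  show "0 < variance (incr X 1)"
    using rv_incr sq_incr nonconst by (rule variance_pos_if_not_AE_const)
qed

subsection \<open>An unbiased estimator built from the increments\<close>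

lemma unbiased2_diff_weights:
  assumes rv: "\<And>i. X i \<in> borel_measurable M"
    and sq: "\<And>i. 1 \<le> i \<Longrightarrow> integrable M (\<lambda>\<omega>. (X i \<omega>)\<^sup>2)"
    and "1 \<le> n" and "d 0 = 0" and "d n = 0"
    and weights: "(\<Sum>k=1..n-1. d k * expectation (incr X k)) = 1"
  shows "unbiased2 X n (\<lambda>i. d (i - 1) - d i)"
  unfolding unbiased2_def
proof (intro allI impI)
  fix t1 t2 :: real
  assume "0 < t2"
  have "integrable M (incr X k)" if "k \<in> {1..n-1}" for k
    using integrable_incr[OF rv sq] that by simp
  then show "expectation (lin_est (\<lambda>i. d (i - 1) - d i) n t1 t2 X) = t2"
    unfolding lin_est_diff_weights[OF \<open>0 < t2\<close> assms(3-5)]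
    using weights by (simp add: integral_sum)
qed

lemma variance_lin_est_diff_weights_le:
  assumes rv: "\<And>i. X i \<in> borel_measurable M"
    and sq: "\<And>i. 1 \<le> i \<Longrightarrow> integrable M (\<lambda>\<omega>. (X i \<omega>)\<^sup>2)"
    and ncp: "NCP X" and "0 < t2" and "1 \<le> n" and "d 0 = 0" and "d n = 0"
    and nonneg: "\<And>k. 0 \<le> d k"
  shows "variance (lin_est (\<lambda>i. d (i - 1) - d i) n t1 t2 X)
    \<le> (\<Sum>k=1..n-1. (t2 * d k)\<^sup>2 * variance (incr X k))"
  unfolding lin_est_diff_weights[OF assms(4-7)] sum_distrib_left mult.assoc[symmetric]
  using rv square_integrable_incr[OF rv sq] ncp nonneg \<open>0 < t2\<close>
  by (intro variance_sum_le_if_covariances_nonpos) (auto simp: NCP_def)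

lemma unbiased_lin_est_variance_le:
  assumes rv: "\<And>i. X i \<in> borel_measurable M"
    and sq: "\<And>i. 1 \<le> i \<Longrightarrow> integrable M (\<lambda>\<omega>. (X i \<omega>)\<^sup>2)"
    and ncp: "NCP X"
  defines "m \<equiv> \<lambda>k. expectation (incr X k)" and "s2 \<equiv> \<lambda>k. variance (incr X k)"
  assumes S_pos: "0 < (\<Sum>k=1..n-1. (m k)\<^sup>2 / s2 k)"
  shows "\<exists>c. unbiased2 X n c \<and>
    (\<forall>t1 t2. 0 < t2 \<longrightarrow> variance (lin_est c n t1 t2 X) \<le> t2\<^sup>2 / (\<Sum>k=1..n-1. (m k)\<^sup>2 / s2 k))"
proof -
  define I where "I = {1..n-1}"
  define S where "S = (\<Sum>k\<in>I. (m k)\<^sup>2 / s2 k)"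
  define d where "d k = (if k \<in> I then m k / s2 k / S else 0)" for k
  have "S > 0"
    using S_pos by (simp add: S_def I_def)
  then have "I \<noteq> {}"
    by (auto simp: S_def)
  then have "1 \<le> n"
    by (simp add: I_def)
  have d_0: "d 0 = 0" and d_n: "d n = 0"
    by (auto simp: d_def I_def)
  have "0 \<le> m k" if "k \<in> I" for k
    using that incr_nonneg[of k X] by (simp add: m_def I_def Bochner_Integration.integral_nonneg)
  then have d_nonneg: "0 \<le> d k" for k
    using \<open>S > 0\<close> variance_positive[of "incr X k"] by (simp add: d_def s2_def)
  have d_I: "d k = m k / s2 k / S" if "k \<in> I" for k
    using that by (simp add: d_def)
  have "(\<Sum>k\<in>I. (t2 * d k)\<^sup>2 * s2 k) = t2\<^sup>2 / S" for t2
    using inverse_variance_weights(2)[OF S_def \<open>S > 0\<close>] by (simp add: d_I cong: sum.cong)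
  then have var_weights: "(\<Sum>k=1..n-1. (t2 * d k)\<^sup>2 * variance (incr X k)) = t2\<^sup>2 / S" for t2
    by (simp add: I_def s2_def)
  have "(\<Sum>k\<in>I. d k * m k) = 1"
    using inverse_variance_weights(1)[OF S_def \<open>S > 0\<close>] by (simp add: d_I cong: sum.cong)
  then have "unbiased2 X n (\<lambda>i. d (i - 1) - d i)"
    using rv sq \<open>1 \<le> n\<close> d_0 d_n unfolding I_def m_def
    by (intro unbiased2_diff_weights[where d = d]) auto
  moreover have "variance (lin_est (\<lambda>i. d (i - 1) - d i) n t1 t2 X) \<le> t2\<^sup>2 / S" if "0 < t2" for t1 t2
    using variance_lin_est_diff_weights_le[where X = X, OF rv sq ncp that \<open>1 \<le> n\<close> d_0 d_n d_nonneg]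
      var_weights[of t2] by simp
  ultimately show ?thesis
    by (intro exI[of _ "\<lambda>i. d (i - 1) - d i"]) (simp add: S_def I_def)
qed

lemma BLUE2_variance_le:
  assumes rv: "\<And>i. X i \<in> borel_measurable M"
    and sq: "\<And>i. 1 \<le> i \<Longrightarrow> integrable M (\<lambda>\<omega>. (X i \<omega>)\<^sup>2)"
    and ncp: "NCP X"
  defines "m \<equiv> \<lambda>k. expectation (incr X k)" and "s2 \<equiv> \<lambda>k. variance (incr X k)"
  assumes S_pos: "0 < (\<Sum>k=1..n-1. (m k)\<^sup>2 / s2 k)"
    and "BLUE2 X n c" and "0 < t2"
  shows "variance (lin_est c n t1 t2 X) \<le> t2\<^sup>2 / (\<Sum>k=1..n-1. (m k)\<^sup>2 / s2 k)"
proof -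
  obtain c' where "unbiased2 X n c'"
    and c'_var: "variance (lin_est c' n t1 t2 X) \<le> t2\<^sup>2 / (\<Sum>k=1..n-1. (m k)\<^sup>2 / s2 k)"
    using unbiased_lin_est_variance_le[OF rv sq ncp S_pos[unfolded m_def s2_def]] \<open>0 < t2\<close>
    unfolding m_def s2_def by blast
  moreover have "variance (lin_est c n t1 t2 X) \<le> variance (lin_est c' n t1 t2 X)"
    using \<open>BLUE2 X n c\<close> \<open>unbiased2 X n c'\<close> \<open>0 < t2\<close> unfolding BLUE2_def by blast
  ultimately show ?thesis
    by linarith
qed

lemma BLUE2_consistent:
  assumes rv: "\<And>i. X i \<in> borel_measurable M"
    and sq: "\<And>i. 1 \<le> i \<Longrightarrow> integrable M (\<lambda>\<omega>. (X i \<omega>)\<^sup>2)"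
    and ncp: "NCP X"
  defines "m \<equiv> \<lambda>k. expectation (incr X k)" and "s2 \<equiv> \<lambda>k. variance (incr X k)"
  assumes diverges: "filterlim (\<lambda>N. \<Sum>k=1..N. (m k)\<^sup>2 / s2 k) at_top sequentially"
    and BLUE: "\<forall>n\<ge>2. BLUE2 X n (C n)" and "0 < t2" and "0 < \<epsilon>"
  shows "(\<lambda>n. prob {\<omega> \<in> space M. \<bar>lin_est (C n) n t1 t2 X \<omega> - t2\<bar> > \<epsilon>}) \<longlonglongrightarrow> 0"
proof (rule tendsto_prob_deviation_0)
  define S where "S n = (\<Sum>k=1..n-1. (m k)\<^sup>2 / s2 k)" for n
  have S_lim: "filterlim S at_top sequentially"
    unfolding S_def[abs_def]
    using filterlim_compose[OF diverges filterlim_minus_const_nat_at_top[of 1]] by simp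
  then show "(\<lambda>n. t2\<^sup>2 / S n) \<longlonglongrightarrow> 0"
    by (rule tendsto_divide_0[OF tendsto_const filterlim_at_top_imp_at_infinity])
  have "eventually (\<lambda>n. 0 < S n \<and> 2 \<le> n) sequentially"
    using S_lim unfolding filterlim_at_top_dense by (auto intro: eventually_conj eventually_ge_at_top)
  then show "eventually (\<lambda>n. variance (lin_est (C n) n t1 t2 X) \<le> t2\<^sup>2 / S n) sequentially"
    using BLUE2_variance_le[OF rv sq ncp] BLUE \<open>0 < t2\<close>
    by (auto simp: S_def m_def s2_def elim!: eventually_mono)
  show "eventually (\<lambda>n. expectation (lin_est (C n) n t1 t2 X) = t2) sequentially"
    using BLUE \<open>0 < t2\<close> by (intro eventually_sequentiallyI[of 2]) (auto simp: BLUE2_def unbiased2_def)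
qed (use rv square_integrable_lin_est[OF rv sq \<open>0 < t2\<close>] \<open>0 < \<epsilon>\<close> in auto)

end

theorem lemma5p1:
  fixes M :: "'a measure" and X :: "nat \<Rightarrow> 'a \<Rightarrow> real" and F :: "real \<Rightarrow> real"
  assumes "prob_space M"
    and rv: "\<And>i. X i \<in> borel_measurable M"
    and indep: "prob_space.indep_vars M (\<lambda>_. borel) X {1..}"
    and df: "\<And>i x. 1 \<le> i \<Longrightarrow> measure M {\<omega> \<in> space M. X i \<omega> \<le> x} = F x"
    and nondeg: "\<exists>x. 0 < F x \<and> F x < 1"
    and moment2: "integrable M (\<lambda>\<omega>. (X 1 \<omega>)\<^sup>2)"
    and ncp: "prob_space.NCP M X"
  defines "m \<equiv> (\<lambda>k. prob_space.expectation M (incr X k))"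
    and "s2 \<equiv> (\<lambda>k. prob_space.variance M (incr X k))"
  shows "(\<forall>n c t1 t2. 2 \<le> n \<longrightarrow> prob_space.BLUE2 M X n c \<longrightarrow> 0 < t2 \<longrightarrow>
            prob_space.variance M (lin_est c n t1 t2 X)
              \<le> t2\<^sup>2 / (\<Sum>k=1..n-1. (m k)\<^sup>2 / s2 k)) \<and>
         (filterlim (\<lambda>N. \<Sum>k=1..N. (m k)\<^sup>2 / s2 k) at_top sequentially \<longrightarrow>
          (\<forall>C t1 t2. (\<forall>n\<ge>2. prob_space.BLUE2 M X n (C n)) \<longrightarrow> 0 < t2 \<longrightarrow>
            (\<forall>\<epsilon>>0. (\<lambda>n. measure M {\<omega> \<in> space M. \<bar>lin_est (C n) n t1 t2 X \<omega> - t2\<bar> > \<epsilon>})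
                    \<longlonglongrightarrow> 0)))"
proof -
  interpret prob_space M by fact
  have sq: "integrable M (\<lambda>\<omega>. (X i \<omega>)\<^sup>2)" if "1 \<le> i" for i
    using integrable_square_if_same_cdf[OF rv rv _ moment2] df[OF that] df[of 1] by simp
  obtain x where "0 < F x" "F x < 1"
    using nondeg by blast
  then have nonconst: "\<not> (AE \<omega> in M. incr X 1 \<omega> = c)" for c
    using incr_1_not_AE_const[OF rv rv indep df df] by simp
  have "0 < (m 1)\<^sup>2 / s2 1"
    using incr_1_mean_variance_pos[OF rv sq nonconst] by (simp add: m_def s2_def)
  moreover have "0 \<le> (m k)\<^sup>2 / s2 k" for k
    by (simp add: s2_def variance_positive)
  ultimately have "0 < (\<Sum>k=1..n-1. (m k)\<^sup>2 / s2 k)" if "2 \<le> n" for n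
    using that by (intro sum_pos2[of _ 1]) auto
  then show ?thesis
    using BLUE2_variance_le[OF rv sq ncp] BLUE2_consistent[OF rv sq ncp]
    unfolding m_def s2_def by blast
qed

end
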